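(* Let $H$ be a Hermitian operator all of whose eigenvalues lie in $[0,1/2]$, let $L\ge4$ be an integer, $e_0$ real and $\Delta>1/\sqrt L$, set $\omega=\Delta-1/\sqrt L$, and assume $\omega<1$, $[e_0-\Delta/2,e_0+\Delta/2]\subseteq[0,1/2]$ and $(e_0\pm\omega/2)L\in\mathbb Z$. Then $\|Q(H)-\Pi_\Delta Q(H)\|\le\frac{2}{\sqrt L}$ (operator norm).
   Context: $\mathrm{sinc}_L(x)=\frac{\sin(\pi Lx)}{L\sin(\pi x)}$ (extended continuously to integers), and $Q(H)=\sum_{m=(e_0-\omega/2)L}^{(e_0+\omega/2)L}\mathrm{sinc}_L(H-m/L)^2$ (sum over consecutive integers). $\Pi_\Delta$ denotes the orthogonal projector onto the span of eigenvectors of $H$ with eigenvalue in $[e_0-\Delta/2,e_0+\Delta/2]$. *)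

theory Defs
  imports "HOL-Analysis.Analysis"
begin

definition adjoint :: "complex^'n^'n \<Rightarrow> complex^'n^'n" where
  "adjoint A = (\<chi> i j. cnj (A $ j $ i))"

definition hermitian :: "complex^'n^'n \<Rightarrow> bool" where
  "hermitian A \<longleftrightarrow> adjoint A = A"

definition opnorm :: "complex^'n^'n \<Rightarrow> real" where
  "opnorm A = onorm (\<lambda>x. A *v x)"

definition cspan :: "(complex^'n) set \<Rightarrow> (complex^'n) set" where
  "cspan S = {\<Sum>v\<in>T. c v *s v | T c. finite T \<and> T \<subseteq> S}"

definition mfun :: "(real \<Rightarrow> real) \<Rightarrow> complex^'n^'n \<Rightarrow> complex^'n^'n" where
  "mfun f H = (THE M. \<forall>v l. H *v v = complex_of_real l *s v
                         \<longrightarrow> M *v v = complex_of_real (f l) *s v)"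

definition PiD :: "complex^'n^'n \<Rightarrow> real \<Rightarrow> real \<Rightarrow> complex^'n^'n" where
  "PiD H e0 D = (THE P. P ** P = P \<and> adjoint P = P \<and>
      range (\<lambda>x. P *v x) = cspan {v. \<exists>l. e0 - D/2 \<le> l \<and> l \<le> e0 + D/2 \<and>
                                          H *v v = complex_of_real l *s v})"

text \<open>sinc_L(x) = sin(pi L x)/(L sin(pi x)), extended continuously to integers
  (where the limit is cos(pi L x)/cos(pi x)).\<close>
definition sincL :: "nat \<Rightarrow> real \<Rightarrow> real" where
  "sincL L x = (if x \<in> \<int> then cos (pi * real L * x) / cos (pi * x)
                else sin (pi * real L * x) / (real L * sin (pi * x)))"

definition Qfun :: "nat \<Rightarrow> real \<Rightarrow> real \<Rightarrow> real \<Rightarrow> real" where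
  "Qfun L e0 w x = (\<Sum>m\<in>{\<lceil>(e0 - w/2) * real L\<rceil>..\<lfloor>(e0 + w/2) * real L\<rfloor>}.
                      (sincL L (x - real_of_int m / real L))^2)"

end

theory Submission
  imports Defs
begin

text \<open>In an orthonormal eigenbasis of H both Q(H) and \<Pi>_\<Delta> are diagonal, so Q(H) - \<Pi>_\<Delta> Q(H)
  is diagonal with entry Q(\<lambda>) at eigenvalues \<lambda> outside [e0 - \<Delta>/2, e0 + \<Delta>/2] and 0 inside;
  its norm is the largest of these Q(\<lambda>). For such \<lambda>, L\<lambda> lies at distance at least
  t = sqrt L / 2 from all integers m of the (narrower) \<omega>-window, and sin(\<pi>x) \<ge> 7x/4 on
  [0, 1/2] gives sinc_L(x)^2 \<le> 1/(3(Lx)^2). Hence Q(\<lambda>) \<le> (1/3) \<Sum>_k 1/(t + k)^2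
  \<le> (1/t^2 + 1/t)/3 \<le> 2/sqrt L. The spectral theorem itself is obtained by maximising the
  Rayleigh quotient on invariant subspaces.\<close>

definition cinner :: "complex^'n \<Rightarrow> complex^'n \<Rightarrow> complex" where
  "cinner x y = (\<Sum>i\<in>UNIV. cnj (x$i) * y$i)"

lemma cinner_add_right: "cinner x (y + z) = cinner x y + cinner x z"
  by (simp add: cinner_def distrib_left sum.distrib)

lemma cinner_diff_right: "cinner x (y - z) = cinner x y - cinner x z"
  by (simp add: cinner_def right_diff_distrib sum_subtractf)

lemma cinner_scale_right: "cinner x (c *s y) = c * cinner x y"
  by (simp add: cinner_def sum_distrib_left ac_simps)

lemma cinner_sum_right: "cinner x (\<Sum>b\<in>B. f b) = (\<Sum>b\<in>B. cinner x (f b))"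
  by (simp add: cinner_def sum_distrib_left) (intro allI sum.swap)

lemma cinner_add_left: "cinner (x + y) z = cinner x z + cinner y z"
  by (simp add: cinner_def distrib_right sum.distrib)

lemma cinner_scale_left: "cinner (c *s x) y = cnj c * cinner x y"
  by (simp add: cinner_def sum_distrib_left ac_simps)

lemma cinner_sum_left: "cinner (\<Sum>b\<in>B. f b) x = (\<Sum>b\<in>B. cinner (f b) x)"
  by (simp add: cinner_def sum_distrib_right) (rule sum.swap)

lemma cinner_zero_right [simp]: "cinner x 0 = 0"
  by (simp add: cinner_def)

lemma cinner_commute: "cinner y x = cnj (cinner x y)"
  by (simp add: cinner_def ac_simps)

lemma cinner_self: "cinner x x = complex_of_real ((norm x)\<^sup>2)"
proof -
  have norm_sq: "(norm x)\<^sup>2 = (\<Sum>i\<in>UNIV. (cmod (x$i))\<^sup>2)"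
    by (simp add: norm_vec_def L2_set_def sum_nonneg)
  show ?thesis
    unfolding cinner_def norm_sq of_real_sum
    by (intro sum.cong refl) (subst complex_norm_square, rule mult.commute)
qed

lemma inner_eq_Re_cinner: "inner x y = Re (cinner x y)"
  by (simp add: cinner_def inner_vec_def inner_complex_def Re_sum)

lemma cinner_adjoint: "cinner x (A *v y) = cinner (adjoint A *v x) y"
  unfolding cinner_def adjoint_def matrix_vector_mult_def
  by (simp add: sum_distrib_left sum_distrib_right ac_simps) (rule sum.swap)

lemma adjoint_mult: "adjoint ((A::complex^'n^'n) ** B) = adjoint B ** adjoint A"
  by (simp add: adjoint_def vec_eq_iff matrix_matrix_mult_def ac_simps)

lemma of_real_scale_eq_scaleR: "complex_of_real c *s (z::complex^'n) = c *\<^sub>R z"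
  by (simp add: vec_eq_iff) (simp add: scaleR_conv_of_real)

lemma hermitian_cinner_sym: "hermitian H \<Longrightarrow> cinner x (H *v y) = cinner (H *v x) y"
  by (simp add: hermitian_def cinner_adjoint)

lemma hermitian_cinner_real:
  assumes "hermitian H"
  shows "cinner x (H *v x) = complex_of_real (Re (cinner x (H *v x)))"
proof -
  have "cinner x (H *v x) = cnj (cinner x (H *v x))"
    using hermitian_cinner_sym[OF assms, of x x] cinner_commute[of "H *v x" x] by simp
  then show ?thesis by (metis Reals_cnj_iff complex_is_Real_iff of_real_Re)
qed

lemma hermitian_eigvecs_orthogonal:
  assumes "hermitian H" "H *v b = complex_of_real l *s b" "H *v v = complex_of_real m *s v" "l \<noteq> m"
  shows "cinner b v = 0"
proof -
  have "complex_of_real m * cinner b v = complex_of_real l * cinner b v"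
    using hermitian_cinner_sym[OF assms(1), of b v] assms(2,3)
    by (simp add: cinner_scale_right cinner_scale_left)
  then show ?thesis using assms(4) by simp
qed

definition orthonormal_set :: "(complex^'n) set \<Rightarrow> bool" where
  "orthonormal_set B \<longleftrightarrow> finite B \<and> (\<forall>b\<in>B. cinner b b = 1)
     \<and> (\<forall>b\<in>B. \<forall>b'\<in>B. b \<noteq> b' \<longrightarrow> cinner b b' = 0)"

lemma orthonormal_set_card_le:
  fixes B :: "(complex^'n) set"
  assumes "orthonormal_set B"
  shows "card B \<le> DIM(complex^'n)"
proof -
  have "pairwise orthogonal B" "0 \<notin> B"
    using assms by (auto simp: orthonormal_set_def pairwise_def orthogonal_def inner_eq_Re_cinner)
  then have "independent B" by (rule pairwise_orthogonal_independent)
  from independent_bound[OF this] show ?thesis by simp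
qed

lemma orthonormal_coeff:
  assumes "orthonormal_set B" "b' \<in> B"
  shows "cinner b' (\<Sum>b\<in>B. c b *s b) = c b'"
proof -
  have "cinner b' (\<Sum>b\<in>B. c b *s b) = (\<Sum>b\<in>B. c b * cinner b' b)"
    by (simp add: cinner_sum_right cinner_scale_right)
  also have "\<dots> = (\<Sum>b\<in>B. if b = b' then c b else 0)"
    using assms unfolding orthonormal_set_def by (intro sum.cong refl) auto
  also have "\<dots> = c b'" using assms by (simp add: orthonormal_set_def)
  finally show ?thesis .
qed

lemma orthonormal_norm_sum:
  assumes "orthonormal_set B"
  shows "(norm (\<Sum>b\<in>B. c b *s b))\<^sup>2 = (\<Sum>b\<in>B. (cmod (c b))\<^sup>2)"
proof -
  have "cinner (\<Sum>b\<in>B. c b *s b) (\<Sum>b\<in>B. c b *s b) = (\<Sum>b\<in>B. cnj (c b) * c b)"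
    by (simp add: cinner_sum_left cinner_scale_left orthonormal_coeff[OF assms])
  also have "\<dots> = complex_of_real (\<Sum>b\<in>B. (cmod (c b))\<^sup>2)"
    unfolding of_real_sum by (intro sum.cong refl) (subst complex_norm_square, rule mult.commute)
  finally show ?thesis unfolding cinner_self of_real_eq_iff .
qed

section \<open>Spectral theorem for Hermitian matrices\<close>

lemma eq_0_if_le_all_pos_multiples:
  fixes n K :: real
  assumes "n \<ge> 0" and le: "\<And>e. e > 0 \<Longrightarrow> n \<le> e * K"
  shows "n = 0"
proof -
  have "n \<le> 0 + e" if "e > 0" for e
  proof -
    have "e / (\<bar>K\<bar> + 1) > 0" using that by simp
    from le[OF this] have "n \<le> e / (\<bar>K\<bar> + 1) * K" .
    also have "\<dots> \<le> e / (\<bar>K\<bar> + 1) * (\<bar>K\<bar> + 1)" using that by (intro mult_left_mono) auto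
    finally show ?thesis by simp
  qed
  then show ?thesis using \<open>n \<ge> 0\<close> field_le_epsilon by (metis order_antisym)
qed

text \<open>The maximum of the Rayleigh quotient over an invariant subspace is an eigenvalue: moving
  from the maximiser x in the direction y = Hx - \<mu>x changes the quotient by 2e|y|^2 + O(e^2).\<close>
lemma rayleigh_max_is_eigvec:
  fixes H :: "complex^'n^'n"
  assumes herm: "hermitian H" and W: "vec.subspace W" and HW: "\<And>z. z \<in> W \<Longrightarrow> H *v z \<in> W"
    and xW: "x \<in> W" and nx: "norm x = 1"
    and max: "\<And>z. z \<in> W \<Longrightarrow> norm z = 1 \<Longrightarrow> Re (cinner z (H *v z)) \<le> Re (cinner x (H *v x))"
  shows "H *v x = complex_of_real (Re (cinner x (H *v x))) *s x"
proof -
  define F where "F z = Re (cinner z (H *v z))" for z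
  define \<mu> where "\<mu> = F x"
  define y where "y = H *v x - complex_of_real \<mu> *s x"
  have xx: "cinner x x = 1" using nx by (simp add: cinner_self)
  have xHx: "cinner x (H *v x) = complex_of_real \<mu>"
    using hermitian_cinner_real[OF herm, of x] by (simp add: \<mu>_def F_def)
  have yW: "y \<in> W" unfolding y_def using W HW xW by (intro vec.subspace_diff vec.subspace_scale)
  have Hx: "H *v x = y + complex_of_real \<mu> *s x" by (simp add: y_def)
  have xy: "cinner x y = 0" using xHx xx by (simp add: y_def cinner_diff_right cinner_scale_right)
  have yx: "cinner y x = 0" using xy cinner_commute[of x y] by simp
  define n where "n = (norm y)\<^sup>2"
  define r where "r = F y"
  have yHx: "cinner y (H *v x) = complex_of_real n"
    by (simp add: Hx cinner_add_right cinner_scale_right yx n_def cinner_self)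
  have xHy: "cinner x (H *v y) = complex_of_real n"
    by (simp add: hermitian_cinner_sym[OF herm] Hx cinner_add_left cinner_scale_left xy n_def cinner_self)
  have "n \<ge> 0" by (simp add: n_def)
  have key: "n \<le> e * (\<mu> * n - r)" if e: "e > 0" for e
  proof -
    define z where "z = x + complex_of_real e *s y"
    have "complex_of_real ((norm z)\<^sup>2) = complex_of_real (1 + e\<^sup>2 * n)"
      unfolding cinner_self[symmetric] using cinner_self[of y]
      by (simp add: z_def cinner_add_left cinner_add_right cinner_scale_left cinner_scale_right
            xx xy yx n_def power2_eq_square)
    then have nz: "(norm z)\<^sup>2 = 1 + e\<^sup>2 * n" by (simp only: of_real_eq_iff)
    moreover have "e\<^sup>2 * n \<ge> 0" by (simp add: n_def)
    ultimately have "norm z > 0" by (metis add_pos_nonneg norm_eq_zero power_zero_numeral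
          zero_less_norm_iff zero_less_one)
    have Fz: "F z = \<mu> + 2 * e * n + e\<^sup>2 * r"
      using hermitian_cinner_real[OF herm, of y]
      by (simp add: F_def z_def vec.add vec.scale cinner_add_left cinner_add_right cinner_scale_left
           cinner_scale_right xHx xHy yHx r_def power2_eq_square algebra_simps)
    define z' where "z' = complex_of_real (1 / norm z) *s z"
    have "z' \<in> W" unfolding z'_def z_def using W xW yW
      by (intro vec.subspace_scale vec.subspace_add)
    moreover have "norm z' = 1" using \<open>norm z > 0\<close> unfolding z'_def of_real_scale_eq_scaleR by simp
    ultimately have "F z' \<le> \<mu>" using max by (simp add: F_def \<mu>_def)
    moreover have "F z' = F z / (norm z)\<^sup>2"
      by (simp add: F_def z'_def vec.scale cinner_scale_left cinner_scale_right power2_eq_square)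
    ultimately have "F z \<le> \<mu> * (norm z)\<^sup>2" using \<open>norm z > 0\<close> by (simp add: divide_le_eq)
    then have "\<mu> + 2 * e * n + e\<^sup>2 * r \<le> \<mu> * (1 + e\<^sup>2 * n)" by (simp only: Fz nz)
    then have "e * (2 * n) \<le> e * (e * (\<mu> * n - r))" by (simp add: algebra_simps power2_eq_square)
    then have "2 * n \<le> e * (\<mu> * n - r)" using e by simp
    then show ?thesis using \<open>n \<ge> 0\<close> by linarith
  qed
  have "n = 0" using eq_0_if_le_all_pos_multiples[OF \<open>n \<ge> 0\<close> key] .
  then have "H *v x = complex_of_real \<mu> *s x" using Hx by (simp add: n_def)
  then show ?thesis unfolding \<mu>_def F_def .
qed

lemma exists_eigvec_in_invariant_subspace:
  fixes H :: "complex^'n^'n"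
  assumes herm: "hermitian H" and W: "vec.subspace W" and HW: "\<And>z. z \<in> W \<Longrightarrow> H *v z \<in> W"
    and "w \<in> W" "w \<noteq> 0"
  shows "\<exists>x\<in>W. norm x = 1 \<and> (\<exists>l::real. H *v x = complex_of_real l *s x)"
proof -
  define S where "S = W \<inter> sphere 0 1"
  have "subspace W" using W by (auto simp: subspace_def vec.subspace_def simp flip: of_real_scale_eq_scaleR)
  then have "compact S" unfolding S_def by (simp add: closed_subspace closed_Int_compact)
  have "norm (complex_of_real (1 / norm w) *s w) = 1"
    using \<open>w \<noteq> 0\<close> unfolding of_real_scale_eq_scaleR by simp
  then have "complex_of_real (1 / norm w) *s w \<in> S"
    using W \<open>w \<in> W\<close> by (simp add: S_def vec.subspace_scale)
  then have "S \<noteq> {}" by blast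
  have "continuous_on S (\<lambda>z. Re (cinner z (H *v z)))"
    unfolding cinner_def matrix_vector_mult_def by (intro continuous_intros)
  then obtain x where "x \<in> S" and "\<And>z. z \<in> S \<Longrightarrow> Re (cinner z (H *v z)) \<le> Re (cinner x (H *v x))"
    using continuous_attains_sup[OF \<open>compact S\<close> \<open>S \<noteq> {}\<close>] by blast
  with rayleigh_max_is_eigvec[OF herm W HW] show ?thesis by (auto simp: S_def)
qed

locale hermitian_eigenbasis =
  fixes H :: "complex^'n^'n" and B :: "(complex^'n) set" and lam :: "complex^'n \<Rightarrow> real"
  assumes hermitian: "hermitian H"
    and orthonormal: "orthonormal_set B"
    and expansion: "\<And>x. x = (\<Sum>b\<in>B. cinner b x *s b)"
    and eigenvalue: "\<And>b. b \<in> B \<Longrightarrow> H *v b = complex_of_real (lam b) *s b"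

text \<open>An orthonormal set of eigenvectors of maximal cardinality spans, since the orthogonal
  complement of its span is invariant and would otherwise contain a further eigenvector.\<close>
lemma hermitian_eigenbasis_exists:
  fixes H :: "complex^'n^'n"
  assumes herm: "hermitian H"
  obtains B lam where "hermitian_eigenbasis H B lam"
proof -
  define E where "E B \<longleftrightarrow> orthonormal_set B \<and> (\<forall>b\<in>B. \<exists>l::real. H *v b = complex_of_real l *s b)"
    for B :: "(complex^'n) set"
  have "E {}" by (simp add: E_def orthonormal_set_def)
  moreover have "\<forall>B. E B \<longrightarrow> card B < Suc DIM(complex^'n)"
    using orthonormal_set_card_le less_Suc_eq_le by (auto simp: E_def)
  ultimately obtain B where B: "E B" and B_max: "\<And>B'. E B' \<Longrightarrow> card B' \<le> card B"
    using ex_has_greatest_nat[of E "{}" card] by blast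
  then have ON: "orthonormal_set B" by (simp add: E_def)
  obtain lam where lam: "\<And>b. b \<in> B \<Longrightarrow> H *v b = complex_of_real (lam b) *s b"
    using B unfolding E_def by metis
  define W where "W = {x. \<forall>b\<in>B. cinner b x = 0}"
  have W: "vec.subspace W"
    by (auto simp: vec.subspace_def W_def cinner_add_right cinner_scale_right)
  have HW: "H *v z \<in> W" if "z \<in> W" for z
    using \<open>z \<in> W\<close> lam by (simp add: W_def hermitian_cinner_sym[OF herm] cinner_scale_left)
  have "x = (\<Sum>b\<in>B. cinner b x *s b)" for x
  proof (rule ccontr)
    define r where "r = x - (\<Sum>b\<in>B. cinner b x *s b)"
    assume "\<not> ?thesis"
    then have "r \<noteq> 0" by (simp add: r_def)
    moreover have "r \<in> W"
      using orthonormal_coeff[OF ON] by (simp add: W_def r_def cinner_diff_right)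
    ultimately obtain y where "y \<in> W" "norm y = 1" "\<exists>l::real. H *v y = complex_of_real l *s y"
      using exists_eigvec_in_invariant_subspace[OF herm W HW] by blast
    moreover have "cinner y b = 0" if "b \<in> B" for b
      using \<open>y \<in> W\<close> that cinner_commute[of y b] by (simp add: W_def)
    ultimately have "E (insert y B)" and "y \<notin> B"
      using B by (auto simp: E_def orthonormal_set_def W_def cinner_self)
    then show False
      using B_max[of "insert y B"] ON by (simp add: orthonormal_set_def)
  qed
  with herm ON lam have "hermitian_eigenbasis H B lam" by (simp add: hermitian_eigenbasis_def)
  then show ?thesis by (rule that)
qed

definition diag_op :: "(complex^'n) set \<Rightarrow> (complex^'n \<Rightarrow> real) \<Rightarrow> complex^'n^'n" where
  "diag_op B g = (\<chi> i j. \<Sum>b\<in>B. complex_of_real (g b) * b$i * cnj (b$j))"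

lemma diag_op_mult_vec: "diag_op B g *v x = (\<Sum>b\<in>B. (complex_of_real (g b) * cinner b x) *s b)"
  unfolding vec_eq_iff diag_op_def matrix_vector_mult_def cinner_def
  by (simp add: sum_distrib_left sum_distrib_right ac_simps) (intro allI sum.swap)

lemma diag_op_diff: "diag_op B g - diag_op B h = diag_op B (\<lambda>b. g b - h b)"
  by (simp add: vec_eq_iff diag_op_def sum_subtractf algebra_simps)

lemma adjoint_diag_op: "adjoint (diag_op B g) = diag_op B g"
  by (simp add: vec_eq_iff diag_op_def adjoint_def ac_simps)

lemma diag_op_mult:
  assumes "orthonormal_set B"
  shows "diag_op B g ** diag_op B h = diag_op B (\<lambda>b. g b * h b)"
  unfolding matrix_eq
proof
  fix x
  have "(diag_op B g ** diag_op B h) *v x = diag_op B g *v (diag_op B h *v x)"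
    by (simp add: matrix_vector_mul_assoc)
  also have "\<dots> = diag_op B (\<lambda>b. g b * h b) *v x"
    unfolding diag_op_mult_vec using orthonormal_coeff[OF assms] by (simp add: mult.assoc)
  finally show "(diag_op B g ** diag_op B h) *v x = diag_op B (\<lambda>b. g b * h b) *v x" .
qed

lemma norm_diag_op_mult_vec_le:
  assumes B: "orthonormal_set B" and span: "\<And>x. x = (\<Sum>b\<in>B. cinner b x *s b)"
    and g: "\<And>b. b \<in> B \<Longrightarrow> \<bar>g b\<bar> \<le> C" and "C \<ge> 0"
  shows "norm (diag_op B g *v x) \<le> C * norm x"
proof -
  have "(norm (diag_op B g *v x))\<^sup>2 = (\<Sum>b\<in>B. \<bar>g b\<bar>\<^sup>2 * (cmod (cinner b x))\<^sup>2)"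
    unfolding diag_op_mult_vec orthonormal_norm_sum[OF B] by (simp add: norm_mult power_mult_distrib)
  also have "\<dots> \<le> (\<Sum>b\<in>B. C\<^sup>2 * (cmod (cinner b x))\<^sup>2)"
    using g by (intro sum_mono mult_right_mono power_mono) auto
  also have "\<dots> = C\<^sup>2 * (norm x)\<^sup>2"
    using orthonormal_norm_sum[OF B, of "\<lambda>b. cinner b x"] span[of x] by (simp add: sum_distrib_left)
  finally have "(norm (diag_op B g *v x))\<^sup>2 \<le> (C * norm x)\<^sup>2" by (simp add: power_mult_distrib)
  then show ?thesis using \<open>C \<ge> 0\<close> by (simp add: power2_le_iff_abs_le)
qed

section \<open>Functional calculus and spectral projectors in an eigenbasis\<close>

lemma orthogonal_projection_unique:
  fixes P P' :: "complex^'n^'n"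
  assumes "P ** P = P" "adjoint P = P" "P' ** P' = P'" "adjoint P' = P'"
    and "range (\<lambda>x. P *v x) = range (\<lambda>x. P' *v x)"
  shows "P = P'"
proof -
  have idem_range: "A ** C = C"
    if A_idem: "A ** A = A" and C_range: "range (\<lambda>x. C *v x) \<subseteq> range (\<lambda>x. A *v x)"
    for A C :: "complex^'n^'n"
    unfolding matrix_eq
  proof
    fix x
    obtain z where z: "C *v x = A *v z" using C_range by blast
    then show "(A ** C) *v x = C *v x"
      by (simp flip: matrix_vector_mul_assoc) (simp add: matrix_vector_mul_assoc A_idem)
  qed
  have "P' = adjoint (P ** P')" using idem_range[OF assms(1)] assms(4,5) by simp
  also have "\<dots> = P' ** P" by (simp add: adjoint_mult assms(2,4))
  also have "\<dots> = P" using idem_range[OF assms(3)] assms(5) by simp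
  finally show ?thesis by simp
qed

context hermitian_eigenbasis
begin

lemma opnorm_diag_op_le:
  assumes "\<And>b. b \<in> B \<Longrightarrow> \<bar>g b\<bar> \<le> C" and "C \<ge> 0"
  shows "opnorm (diag_op B g) \<le> C"
  unfolding opnorm_def by (intro onorm_le norm_diag_op_mult_vec_le[OF orthonormal expansion] assms)

lemma diag_op_mult_eigvec:
  assumes v: "H *v v = complex_of_real l *s v"
    and g: "\<And>b. b \<in> B \<Longrightarrow> lam b = l \<Longrightarrow> g b = c"
  shows "diag_op B g *v v = complex_of_real c *s v"
proof -
  have "diag_op B g *v v = (\<Sum>b\<in>B. complex_of_real c *s (cinner b v *s b))"
    unfolding diag_op_mult_vec
  proof (intro sum.cong refl)
    fix b assume b: "b \<in> B"
    show "(complex_of_real (g b) * cinner b v) *s b = complex_of_real c *s (cinner b v *s b)"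
    proof (cases "lam b = l")
      case True
      then show ?thesis using g[OF b] by (simp add: vector_smult_assoc)
    next
      case False
      then show ?thesis using hermitian_eigvecs_orthogonal[OF hermitian eigenvalue[OF b] v] by simp
    qed
  qed
  also have "\<dots> = complex_of_real c *s (\<Sum>b\<in>B. cinner b v *s b)"
    by (rule vec.scale_sum_right[symmetric])
  also have "\<dots> = complex_of_real c *s v" by (simp only: expansion[symmetric])
  finally show ?thesis .
qed

lemma mfun_eq_diag_op: "mfun f H = diag_op B (\<lambda>b. f (lam b))"
  unfolding mfun_def
proof (rule the_equality)
  show "\<forall>v l. H *v v = complex_of_real l *s v \<longrightarrow> diag_op B (\<lambda>b. f (lam b)) *v v = complex_of_real (f l) *s v"
    by (blast intro: diag_op_mult_eigvec)
next
  fix M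
  assume M: "\<forall>v l. H *v v = complex_of_real l *s v \<longrightarrow> M *v v = complex_of_real (f l) *s v"
  show "M = diag_op B (\<lambda>b. f (lam b))"
    unfolding matrix_eq
  proof
    fix x
    have "M *v x = (\<Sum>b\<in>B. cinner b x *s (M *v b))"
      by (subst expansion) (simp add: vec.sum vec.scale)
    also have "\<dots> = diag_op B (\<lambda>b. f (lam b)) *v x"
      unfolding diag_op_mult_vec
    proof (intro sum.cong refl)
      fix b assume "b \<in> B"
      then have "M *v b = complex_of_real (f (lam b)) *s b" using M eigenvalue by blast
      then show "cinner b x *s (M *v b) = (complex_of_real (f (lam b)) * cinner b x) *s b"
        by (simp add: mult.commute)
    qed
    finally show "M *v x = diag_op B (\<lambda>b. f (lam b)) *v x" .
  qed
qed

lemma range_diag_op_indicator: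
  "range (\<lambda>x. diag_op B (\<lambda>b. of_bool (lam b \<in> S)) *v x)
     = cspan {v. \<exists>l\<in>S. H *v v = complex_of_real l *s v}"
  (is "range (\<lambda>x. ?P *v x) = cspan ?E")
proof
  show "range (\<lambda>x. ?P *v x) \<subseteq> cspan ?E"
  proof clarify
    fix x
    define T where "T = {b\<in>B. lam b \<in> S}"
    have "?P *v x = (\<Sum>b\<in>B. if lam b \<in> S then cinner b x *s b else 0)"
      unfolding diag_op_mult_vec by (intro sum.cong) auto
    also have "\<dots> = (\<Sum>b\<in>T. cinner b x *s b)"
      using orthonormal by (simp add: T_def sum.inter_filter orthonormal_set_def)
    finally have "?P *v x = (\<Sum>b\<in>T. cinner b x *s b)" .
    moreover have "finite T" "T \<subseteq> ?E"
      using orthonormal eigenvalue by (auto simp: T_def orthonormal_set_def)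
    ultimately show "?P *v x \<in> cspan ?E"
      unfolding cspan_def mem_Collect_eq by (intro exI[where x = T] exI[where x = "\<lambda>b. cinner b x"]) simp
  qed
next
  show "cspan ?E \<subseteq> range (\<lambda>x. ?P *v x)"
  proof
    fix y assume "y \<in> cspan ?E"
    then obtain T c where y: "y = (\<Sum>v\<in>T. c v *s v)" and "T \<subseteq> ?E"
      unfolding cspan_def by blast
    have fixE: "?P *v v = v" if "v \<in> ?E" for v
    proof -
      obtain l where "l \<in> S" "H *v v = complex_of_real l *s v" using \<open>v \<in> ?E\<close> by blast
      then show ?thesis using diag_op_mult_eigvec[of v l "\<lambda>b. of_bool (lam b \<in> S)" 1] by simp
    qed
    have "?P *v y = (\<Sum>v\<in>T. c v *s (?P *v v))" by (simp add: y vec.sum vec.scale)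
    also have "\<dots> = y" unfolding y using \<open>T \<subseteq> ?E\<close> fixE by (intro sum.cong refl) auto
    finally have "?P *v y = y" .
    then show "y \<in> range (\<lambda>x. ?P *v x)" by (metis rangeI)
  qed
qed

lemma PiD_eq_diag_op:
  "PiD H e0 D = diag_op B (\<lambda>b. of_bool (lam b \<in> {e0 - D/2 .. e0 + D/2}))"
proof -
  let ?P = "diag_op B (\<lambda>b. of_bool (lam b \<in> {e0 - D/2 .. e0 + D/2}))"
  have idem: "?P ** ?P = ?P" by (simp add: diag_op_mult[OF orthonormal] flip: of_bool_conj)
  have "{v. \<exists>l. e0 - D/2 \<le> l \<and> l \<le> e0 + D/2 \<and> H *v v = complex_of_real l *s v}
      = {v. \<exists>l\<in>{e0 - D/2 .. e0 + D/2}. H *v v = complex_of_real l *s v}" by auto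
  then have P_range: "range (\<lambda>x. ?P *v x)
      = cspan {v. \<exists>l. e0 - D/2 \<le> l \<and> l \<le> e0 + D/2 \<and> H *v v = complex_of_real l *s v}"
    by (simp only: range_diag_op_indicator)
  show ?thesis
    unfolding PiD_def
  proof (rule the_equality)
    fix P' assume P': "P' ** P' = P' \<and> adjoint P' = P' \<and> range (\<lambda>x. P' *v x)
      = cspan {v. \<exists>l. e0 - D/2 \<le> l \<and> l \<le> e0 + D/2 \<and> H *v v = complex_of_real l *s v}"
    show "P' = ?P"
    proof (rule orthogonal_projection_unique)
      show "P' ** P' = P'" "adjoint P' = P'" using P' by auto
      show "range (\<lambda>x. P' *v x) = range (\<lambda>x. ?P *v x)" using P' P_range by simp
    qed (rule idem, rule adjoint_diag_op)
  qed (intro conjI idem adjoint_diag_op P_range)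
qed

end

section \<open>Estimates for the sinc kernel\<close>

text \<open>From the Taylor bound sin t \<ge> t - t^3/6 and \<pi> - \<pi>^3/24 > 7/4.\<close>
lemma sin_pi_mult_ge:
  fixes y :: real
  assumes "0 \<le> y" "y \<le> 1/2"
  shows "7/4 * y \<le> sin (pi * y)"
proof -
  define t where "t = pi * y"
  have "\<bar>sin t - (\<Sum>m<3. sin_coeff m * t ^ m)\<bar> \<le> inverse (fact 3) * \<bar>t\<bar> ^ 3"
    by (rule Maclaurin_sin_bound)
  moreover have "(\<Sum>m<3. sin_coeff m * t ^ m) = t"
    by (simp add: sin_coeff_def numeral_3_eq_3 lessThan_Suc)
  moreover have "inverse (fact 3 :: real) = 1/6"
    by (simp add: numeral_3_eq_3)
  moreover have "t \<ge> 0" using assms by (simp add: t_def)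
  ultimately have "\<bar>sin t - t\<bar> \<le> t^3 / 6" by simp
  then have taylor: "t - t^3/6 \<le> sin t" by linarith
  have "pi^3 \<le> 3.1416^3" using pi_approx pi_gt_zero by (intro power_mono) auto
  also have "(3.1416::real)^3 \<le> 31.01" by (simp add: power3_eq_cube)
  finally have "pi^3 \<le> 31.01" .
  moreover have "y^2 \<le> 1/4" using assms power_mono[of y "1/2" 2] by (simp add: power2_eq_square)
  ultimately have "pi^3 * y^2 \<le> 31.01 * (1/4)" by (intro mult_mono) auto
  then have "7/4 \<le> pi - pi^3 * y^2 / 6" using pi_approx by simp
  then have "7/4 * y \<le> (pi - pi^3 * y^2 / 6) * y" using assms by (intro mult_right_mono)
  also have "\<dots> = t - t^3/6" by (simp add: t_def power_mult_distrib algebra_simps power3_eq_cube power2_eq_square)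
  finally show ?thesis using taylor by (simp add: t_def)
qed

lemma sincL_square_le:
  assumes "L > 0" "x \<noteq> 0" "\<bar>x\<bar> \<le> 1/2"
  shows "(sincL L x)\<^sup>2 \<le> 1 / (3 * (real L * x)\<^sup>2)"
proof -
  have "x \<notin> \<int>"
  proof
    assume "x \<in> \<int>"
    then have "\<bar>x\<bar> \<ge> 1" using \<open>x \<noteq> 0\<close> by (metis Ints_cases of_int_1_le_iff of_int_abs zero_less_abs_iff
          int_one_le_iff_zero_less of_int_0_eq_iff)
    then show False using assms by simp
  qed
  define u where "u = \<bar>sin (pi * x)\<bar>"
  have "7/4 * \<bar>x\<bar> \<le> u"
    using sin_pi_mult_ge[of "\<bar>x\<bar>"] assms by (cases "x \<ge> 0") (auto simp: u_def)
  then have "(7/4 * \<bar>x\<bar>)\<^sup>2 \<le> u\<^sup>2" by (intro power_mono) auto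
  moreover have "(7/4 * \<bar>x\<bar>)\<^sup>2 = 49/16 * x\<^sup>2" by (simp add: power2_eq_square)
  ultimately have "3 * x\<^sup>2 \<le> u\<^sup>2" using zero_le_power2[of x] by linarith
  from mult_left_mono[OF this, of "(real L)\<^sup>2"]
  have "3 * (real L * x)\<^sup>2 \<le> (real L * u)\<^sup>2" by (simp add: power_mult_distrib algebra_simps)
  moreover have "(sincL L x)\<^sup>2 = (sin (pi * real L * x))\<^sup>2 / (real L * u)\<^sup>2"
    using \<open>x \<notin> \<int>\<close> by (simp add: sincL_def u_def power_divide power_mult_distrib)
  ultimately show ?thesis
    using assms by (auto simp: abs_square_le_1 intro!: frac_le)
qed

lemma sum_inverse_square_le:
  fixes t :: real
  assumes "t > 0"
  shows "(\<Sum>k\<le>n. 1 / (t + real k)\<^sup>2) \<le> 1/t\<^sup>2 + 1/t"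
proof -
  have "(\<Sum>k\<le>n. 1 / (t + real k)\<^sup>2) \<le> 1/t\<^sup>2 + 1/t - 1/(t + real n)"
  proof (induction n)
    case (Suc n)
    have pos: "t + real n > 0" using assms by simp
    then have "1 / (t + real n + 1)\<^sup>2 \<le> 1 / ((t + real n) * (t + real n + 1))"
      by (intro divide_left_mono) (auto simp: power2_eq_square)
    also have "\<dots> = 1 / (t + real n) - 1 / (t + real n + 1)" using pos by (simp add: field_simps)
    finally have step: "1 / (t + real n + 1)\<^sup>2 \<le> 1 / (t + real n) - 1 / (t + real n + 1)" .
    have ts: "t + real (Suc n) = t + real n + 1" by simp
    show ?case unfolding sum.atMost_Suc ts using Suc.IH step by linarith
  qed (use assms in simp)
  moreover have "1/(t + real n) \<ge> 0" using assms by simp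
  ultimately show ?thesis by linarith
qed

text \<open>The integers m \<le> c lie at distances at least t, t + 1, t + 2, ... from x.\<close>
lemma sum_inverse_square_below_le:
  fixes a c :: int and x t :: real
  assumes "t > 0" "c + t \<le> x"
  shows "(\<Sum>m\<in>{a..c}. 1 / (x - m)\<^sup>2) \<le> 1/t\<^sup>2 + 1/t"
proof -
  define K where "K = {..nat (c - a)}"
  define g where "g k = c - int k" for k
  have "{a..c} \<subseteq> g ` K"
    by (auto simp: K_def g_def image_iff intro!: bexI[where x = "nat (c - _)"])
  then have "(\<Sum>m\<in>{a..c}. 1 / (x - m)\<^sup>2) \<le> (\<Sum>m\<in>g ` K. 1 / (x - m)\<^sup>2)"
    by (intro sum_mono2) (auto simp: K_def)
  also have "\<dots> = (\<Sum>k\<in>K. 1 / (x - g k)\<^sup>2)"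
    by (subst sum.reindex) (auto simp: inj_on_def g_def)
  also have "\<dots> \<le> (\<Sum>k\<in>K. 1 / (t + real k)\<^sup>2)"
    using assms by (intro sum_mono divide_left_mono power_mono) (auto simp: g_def)
  also have "\<dots> \<le> 1/t\<^sup>2 + 1/t" unfolding K_def by (rule sum_inverse_square_le[OF assms(1)])
  finally show ?thesis .
qed

lemma sum_inverse_square_outside_le:
  fixes a c :: int and x t :: real
  assumes "t > 0" "c + t \<le> x \<or> x \<le> a - t"
  shows "(\<Sum>m\<in>{a..c}. 1 / (x - m)\<^sup>2) \<le> 1/t\<^sup>2 + 1/t"
  using assms(2)
proof
  assume "x \<le> a - t"
  have "(\<Sum>m\<in>{a..c}. 1 / (x - m)\<^sup>2) = (\<Sum>m\<in>uminus ` {a..c}. 1 / (- x - m)\<^sup>2)"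
    by (subst sum.reindex) (auto simp: power2_commute)
  also have "\<dots> \<le> 1/t\<^sup>2 + 1/t"
    using \<open>x \<le> a - t\<close> by (simp only: image_uminus_atLeastAtMost) (intro sum_inverse_square_below_le assms(1), simp)
  finally show ?thesis .
qed (rule sum_inverse_square_below_le[OF assms(1)])

lemma sum_sincL_square_le:
  fixes a c :: int and lam t :: real
  assumes "L > 0" "0 \<le> lam" "lam \<le> 1/2" "0 \<le> a" "2 * c \<le> L" "t > 0"
    and far: "c + t \<le> L * lam \<or> L * lam \<le> a - t"
  shows "(\<Sum>m\<in>{a..c}. (sincL L (lam - m / L))\<^sup>2) \<le> (1/t\<^sup>2 + 1/t) / 3"
proof -
  have "(sincL L (lam - m / L))\<^sup>2 \<le> 1 / (L * lam - m)\<^sup>2 / 3" if "m \<in> {a..c}" for m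
  proof -
    have "real_of_int (2 * m) \<le> real_of_int (int L)" "0 \<le> real_of_int m"
      using that assms(4,5) by (simp_all only: of_int_le_iff of_int_0_le_iff) auto
    then have "0 \<le> m / L" "m / L \<le> 1/2" using \<open>L > 0\<close> by (simp_all add: pos_divide_le_eq)
    then have bound: "\<bar>lam - m / L\<bar> \<le> 1/2" using assms(2,3) by linarith
    have eq: "L * (lam - m / L) = L * lam - m" using \<open>L > 0\<close> by (simp add: right_diff_distrib)
    have "L * lam \<noteq> m" using that far \<open>t > 0\<close> by auto
    then have "lam - m / L \<noteq> 0" using eq by auto
    from sincL_square_le[OF \<open>L > 0\<close> this bound] show ?thesis by (simp add: eq)
  qed
  then have "(\<Sum>m\<in>{a..c}. (sincL L (lam - m / L))\<^sup>2) \<le> (\<Sum>m\<in>{a..c}. 1 / (L * lam - m)\<^sup>2) / 3"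
    unfolding sum_divide_distrib by (rule sum_mono)
  also have "\<dots> \<le> (1/t\<^sup>2 + 1/t) / 3"
    using sum_inverse_square_outside_le[OF \<open>t > 0\<close> far] by simp
  finally show ?thesis .
qed

lemma inverse_sq_half_plus_inverse_half_le:
  fixes s :: real
  assumes "s \<ge> 2"
  shows "(1/(s/2)\<^sup>2 + 1/(s/2)) / 3 \<le> 2 / s"
proof -
  have "1/(s/2)\<^sup>2 \<le> 1/(s/2)" using assms by (simp add: power2_eq_square divide_simps)
  then have "1/(s/2)\<^sup>2 + 1/(s/2) \<le> 2 * (1/(s/2))" by linarith
  then have "(1/(s/2)\<^sup>2 + 1/(s/2)) / 3 \<le> 2 * (1/(s/2)) / 3" by (rule divide_right_mono) simp
  also have "\<dots> \<le> 2 / s" using assms by (simp add: divide_simps)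
  finally show ?thesis .
qed

lemma Qfun_outside_window_le:
  fixes L :: nat and e0 \<Delta> \<omega> lam :: real
  assumes "L \<ge> 4" and "0 \<le> \<Delta>" and \<omega>: "\<omega> = \<Delta> - 1 / sqrt L"
    and window: "{e0 - \<Delta>/2 .. e0 + \<Delta>/2} \<subseteq> {0 .. 1/2}"
    and "(e0 - \<omega>/2) * L \<in> \<int>" "(e0 + \<omega>/2) * L \<in> \<int>"
    and "0 \<le> lam" "lam \<le> 1/2" and outside: "lam \<notin> {e0 - \<Delta>/2 .. e0 + \<Delta>/2}"
  shows "Qfun L e0 \<omega> lam \<le> 2 / sqrt L"
proof -
  define s where "s = sqrt L"
  have "s \<ge> 2" unfolding s_def using \<open>L \<ge> 4\<close> real_sqrt_le_mono[of 4 L] by simp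
  have L: "real L = s\<^sup>2" unfolding s_def by simp
  obtain a c :: int where a: "(e0 - \<omega>/2) * L = a" and c: "(e0 + \<omega>/2) * L = c"
    using \<open>(e0 - \<omega>/2) * L \<in> \<int>\<close> \<open>(e0 + \<omega>/2) * L \<in> \<int>\<close> by (metis Ints_cases)
  have "\<omega> \<le> \<Delta>" "0 \<le> e0 - \<Delta>/2" "e0 + \<Delta>/2 \<le> 1/2" using \<omega> window \<open>0 \<le> \<Delta>\<close> by auto
  then have lo: "0 \<le> e0 - \<omega>/2" and hi: "2 * (e0 + \<omega>/2) \<le> 1" by (simp_all add: field_simps)
  have "real_of_int 0 \<le> real_of_int a" "real_of_int (2 * c) \<le> real_of_int (int L)"
    using mult_nonneg_nonneg[OF lo, of "real L"] mult_right_mono[OF hi, of "real L"]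
    by (simp_all add: algebra_simps flip: a c)
  then have "0 \<le> a" "2 * c \<le> L" by (simp_all only: of_int_le_iff)
  have "\<Delta>/2 - \<omega>/2 = 1 / (2 * s)" using \<omega> by (simp add: s_def field_simps)
  then have gap: "L * (\<Delta>/2 - \<omega>/2) = s/2"
    using \<open>s \<ge> 2\<close> by (simp add: L power2_eq_square)
  have "c + s/2 \<le> L * lam" if "e0 + \<Delta>/2 < lam"
  proof -
    have "L * (\<Delta>/2 - \<omega>/2) \<le> L * (lam - (e0 + \<omega>/2))" using that by (intro mult_left_mono) auto
    moreover have "L * (lam - (e0 + \<omega>/2)) = L * lam - c" by (simp add: algebra_simps flip: c)
    ultimately show ?thesis using gap by linarith
  qed
  moreover have "L * lam \<le> a - s/2" if "lam < e0 - \<Delta>/2"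
  proof -
    have "L * (\<Delta>/2 - \<omega>/2) \<le> L * ((e0 - \<omega>/2) - lam)" using that by (intro mult_left_mono) auto
    moreover have "L * ((e0 - \<omega>/2) - lam) = a - L * lam" by (simp add: algebra_simps flip: a)
    ultimately show ?thesis using gap by linarith
  qed
  ultimately have "c + s/2 \<le> L * lam \<or> L * lam \<le> a - s/2" using outside by fastforce
  with \<open>0 \<le> a\<close> \<open>2 * c \<le> L\<close> have "Qfun L e0 \<omega> lam \<le> (1/(s/2)\<^sup>2 + 1/(s/2)) / 3"
    unfolding Qfun_def a c using assms \<open>s \<ge> 2\<close> by (intro sum_sincL_square_le) auto
  also have "\<dots> \<le> 2 / s" using \<open>s \<ge> 2\<close> by (rule inverse_sq_half_plus_inverse_half_le)
  finally show ?thesis by (simp add: s_def)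
qed

theorem mainTheorem6:
  fixes H :: "complex^'n^'n" and L :: nat and e0 \<Delta> \<omega> :: real
  assumes herm: "hermitian H"
    and spec: "\<And>v c. v \<noteq> 0 \<Longrightarrow> H *v v = c *s v \<Longrightarrow> 0 \<le> Re c \<and> Re c \<le> 1/2"
    and L4: "L \<ge> 4"
    and Dgt: "\<Delta> > 1 / sqrt (real L)"
    and wdef: "\<omega> = \<Delta> - 1 / sqrt (real L)"
    and wlt: "\<omega> < 1"
    and win: "{e0 - \<Delta>/2 .. e0 + \<Delta>/2} \<subseteq> {0 .. 1/2}"
    and intlo: "(e0 - \<omega>/2) * real L \<in> \<int>"
    and inthi: "(e0 + \<omega>/2) * real L \<in> \<int>"
  shows "opnorm (mfun (Qfun L e0 \<omega>) H - PiD H e0 \<Delta> ** mfun (Qfun L e0 \<omega>) H)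
           \<le> 2 / sqrt (real L)"
proof -
  obtain B lam where "hermitian_eigenbasis H B lam"
    using hermitian_eigenbasis_exists[OF herm] .
  then interpret hermitian_eigenbasis H B lam .
  have "0 \<le> 1 / sqrt L" by simp
  with Dgt have "0 \<le> \<Delta>" by linarith
  define Q where "Q = Qfun L e0 \<omega>"
  define W where "W = {e0 - \<Delta>/2 .. e0 + \<Delta>/2}"
  have "mfun Q H - PiD H e0 \<Delta> ** mfun Q H = diag_op B (\<lambda>b. Q (lam b) - of_bool (lam b \<in> W) * Q (lam b))"
    unfolding mfun_eq_diag_op PiD_eq_diag_op diag_op_mult[OF orthonormal] diag_op_diff W_def ..
  moreover have "\<bar>Q (lam b) - of_bool (lam b \<in> W) * Q (lam b)\<bar> \<le> 2 / sqrt L" if "b \<in> B" for b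
  proof (cases "lam b \<in> W")
    case False
    have "b \<noteq> 0" using orthonormal \<open>b \<in> B\<close> by (auto simp: orthonormal_set_def)
    with spec eigenvalue[OF \<open>b \<in> B\<close>] have "0 \<le> lam b" "lam b \<le> 1/2" by force+
    with False have "Q (lam b) \<le> 2 / sqrt L"
      unfolding Q_def W_def by (intro Qfun_outside_window_le[OF L4 \<open>0 \<le> \<Delta>\<close> wdef win intlo inthi])
    moreover have "Q (lam b) \<ge> 0" by (simp add: Q_def Qfun_def sum_nonneg)
    ultimately show ?thesis using False by simp
  qed simp
  ultimately show ?thesis by (simp add: Q_def opnorm_diag_op_le)
qed

end
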